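(* Let $r,n\ge2$, $\pi=A_1\cdots A_n\in\mathbb{S}_{2rn}$ with $A_j=(2r(j-1)+1\ \cdots\ 2rj)$, and $\mathcal{C}$ its conjugacy class. Let $t\in\mathcal{C}$ with $t\pi=\pi t$ and $g\in\mathbb{S}_{2rn}$ with $g\pi g^{-1}=t$. Write $t=A_1^{d_1}\cdots A_n^{d_n}B$ and $g^{-1}\pi g=A_1^{e_1}\cdots A_n^{e_n}B'$ with $0\le d_j,e_j\le 2r-1$ and $B,B'\in\langle B_1,\dots,B_{n-1}\rangle$. (a) If $n$ is odd, then $\sum_{j=1}^n(e_j+d_j)$ is even. (b) If $r$ and $n$ are both even, then $\sum_{j=1}^n(e_j+d_j)\equiv0\pmod 4$.
   Context: Permutations are composed right to left. $B_i$ ($1\le i\le n-1$) is the involution exchanging $2r(i-1)+m\leftrightarrow 2ri+m$ for $1\le m\le 2r$. The centralizer of $\pi$ is $\mathbb{S}_{2rn}^\pi=\langle A_1,\dots,A_n\rangle\rtimes\langle B_1,\dots,B_{n-1}\rangle\cong\mathbb{Z}_{2r}^n\rtimes\mathbb{S}_n$, so every element of it is uniquely written $A_1^{d_1}\cdots A_n^{d_n}B$ with $0\le d_j\le 2r-1$ and $B\in\langle B_1,\dots,B_{n-1}\rangle$; both $t$ and $g^{-1}\pi g$ lie in this centralizer. *)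

theory Defs
  imports "HOL-Combinatorics.Permutations"
begin

text \<open>Permutations of {1..2rn} are functions nat => nat that permute this set;
  composition is right to left, i.e. (g h)(x) = g (h x), which is the HOL composition.\<close>

definition cycA :: "nat \<Rightarrow> nat \<Rightarrow> nat \<Rightarrow> nat" where
  "cycA r j x = (if 2*r*(j-1) < x \<and> x \<le> 2*r*j
                 then (if x = 2*r*j then 2*r*(j-1) + 1 else x + 1) else x)"

definition invB :: "nat \<Rightarrow> nat \<Rightarrow> nat \<Rightarrow> nat" where
  "invB r i x = (if 2*r*(i-1) < x \<and> x \<le> 2*r*i then x + 2*r
                 else if 2*r*i < x \<and> x \<le> 2*r*(i+1) then x - 2*r else x)"

definition Apow_prod :: "nat \<Rightarrow> nat \<Rightarrow> (nat \<Rightarrow> nat) \<Rightarrow> nat \<Rightarrow> nat" where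
  "Apow_prod r n d = foldr (\<lambda>j f. (cycA r j ^^ d j) \<circ> f) [1..<n+1] id"

definition piperm :: "nat \<Rightarrow> nat \<Rightarrow> nat \<Rightarrow> nat" where
  "piperm r n = Apow_prod r n (\<lambda>_. 1)"

text \<open>The subgroup generated by B_1, ..., B_{n-1} (the B_i are involutions,
  so finite products of generators suffice).\<close>
inductive_set Bgroup :: "nat \<Rightarrow> nat \<Rightarrow> (nat \<Rightarrow> nat) set" for r n where
  Bid: "id \<in> Bgroup r n"
| Bstep: "\<lbrakk>B \<in> Bgroup r n; 1 \<le> i; i \<le> n - 1\<rbrakk> \<Longrightarrow> invB r i \<circ> B \<in> Bgroup r n"

end

theory Submission
  imports Defs "HOL-Combinatorics.Cycles"
begin

text \<open>
  An element \<open>y = A\<^sub>1\<^bsup>a\<^sub>1\<^esup> \<cdots> A\<^sub>n\<^bsup>a\<^sub>n\<^esup> B\<close> of the centralizer of \<open>\<pi>\<close> permutes the blocks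
  (the supports of the \<open>A\<^sub>j\<close>) by some \<open>\<tau>\<close> and rotates them. Starting from a point of block \<open>j\<close>,
  \<open>y\<^sup>b\<close> lands in the \<open>\<pi>\<close>-orbit of the start exactly when \<open>b\<close> is a multiple of the length \<open>k\<close>
  of the \<open>\<tau>\<close>-cycle of \<open>j\<close>, and \<open>y\<^sup>k\<close> acts there as \<open>\<pi>\<^sup>U\<close>, \<open>U\<close> the sum of the \<open>a\<close>'s along the cycle.

  For \<open>t = g\<pi>g\<^sup>-\<^sup>1\<close> and \<open>s = g\<^sup>-\<^sup>1\<pi>g\<close>, the maps \<open>\<pi>\<close> and \<open>t\<close> commute and both have period \<open>2r\<close> at
  every point \<open>p\<close>. The first return \<open>k\<close> of \<open>t\<close> to \<open>\<langle>\<pi>\<rangle>p\<close> equals the first return of \<open>\<pi>\<close> to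
  \<open>\<langle>t\<rangle>p\<close>, which \<open>g\<^sup>-\<^sup>1\<close> turns into a first return of \<open>s\<close>; writing \<open>2r = kl\<close>, \<open>U = k\<alpha>\<close> and
  \<open>U' = k\<beta>\<close> for the two cycle sums, \<open>\<alpha>\<beta> \<equiv> 1 (mod l)\<close>. Hence \<open>U + k\<close> is even, and
  \<open>U \<equiv> U' (mod 4)\<close> when \<open>4 | 2r\<close>. Since \<open>\<Sum>d\<close> is the sum of the \<open>U\<close> over the \<open>\<tau>\<close>-cycles, this gives
  \<open>\<Sum>d \<equiv> \<Sum>e \<equiv> n (mod 2)\<close>, and, pairing the cycles of \<open>t\<close> and \<open>s\<close> by averaging over all points,
  \<open>\<Sum>d \<equiv> \<Sum>e (mod 4)\<close> when \<open>r\<close> is even.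
\<close>

section \<open>Commuting maps with a common period\<close>

lemma funpow_conj_apply:
  assumes "f \<circ> u = v \<circ> f"
  shows "f ((u^^a) x) = (v^^a) (f x)"
proof (induction a)
  case (Suc a)
  then show ?case using fun_cong[OF assms] by simp
qed simp

lemma funpow_commute_apply:
  assumes "x \<circ> y = y \<circ> x"
  shows "(x^^a) ((y^^b) p) = (y^^b) ((x^^a) p)"
proof -
  have "y ((x^^a) q) = (x^^a) (y q)" for q
    using funpow_conj_apply[of y x x] assms by simp
  then have "(x^^a) \<circ> y = y \<circ> (x^^a)" by auto
  then show ?thesis by (rule funpow_conj_apply)
qed

lemma funpow_mult_return:
  assumes "x \<circ> y = y \<circ> x" "(y^^k) p = (x^^U) p"
  shows "(y^^(k*m)) p = (x^^(U*m)) p"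
proof (induction m)
  case (Suc m)
  have "(y^^(k * Suc m)) p = (y^^k) ((x^^(U*m)) p)"
    using Suc by (simp add: funpow_add)
  also have "\<dots> = (x^^(U*m)) ((x^^U) p)"
    using funpow_commute_apply[OF assms(1)] assms(2) by metis
  also have "\<dots> = (x^^(U * Suc m)) p"
    by (metis add.commute comp_apply funpow_add mult_Suc_right)
  finally show ?case .
qed simp

lemma coprime_mod_inverse_nat:
  fixes l g :: nat
  assumes "coprime l g"
  obtains c where "(g * c) mod l = 1 mod l"
proof (cases "g = 0")
  case True
  then show ?thesis using assms that[of 0] by simp
next
  case False
  then obtain u v where "g * u = l * v + gcd g l" using bezout_nat by blast
  then have "g * u = 1 + v * l"
    using assms by (simp add: coprime_iff_gcd_eq_1 gcd.commute)
  then have "(g * u) mod l = (1 + v * l) mod l" by simp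
  also have "\<dots> = 1 mod l" by (rule mod_mult_self1)
  finally show ?thesis by (rule that)
qed

lemma commuting_first_return:
  fixes x y :: "'a \<Rightarrow> 'a"
  assumes comm: "x \<circ> y = y \<circ> x" and M: "0 < M"
    and x_period: "\<And>a b. (x^^a) p = (x^^b) p \<longleftrightarrow> a mod M = b mod M"
    and y_period: "\<And>a b. (y^^a) p = (y^^b) p \<longleftrightarrow> a mod M = b mod M"
    and return: "\<And>b. (\<exists>a. (y^^b) p = (x^^a) p) \<longleftrightarrow> k dvd b"
    and k_return: "(y^^k) p = (x^^U) p"
  shows "k dvd M" "k dvd U" "coprime (M div k) (U div k)" "\<exists>c. (x^^k) p = (y^^c) p"
proof -
  have y_M: "(y^^M) p = (x^^0) p" using y_period[of M 0] by simp
  then show "k dvd M" using return by blast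
  then obtain l where l: "M = k * l" by blast
  with M have "0 < k" "0 < l" by auto
  have "(x^^(U*l)) p = (x^^0) p"
    using funpow_mult_return[OF comm k_return, of l] y_M l by simp
  then have "(U * l) mod (k * l) = 0"
    using x_period[of "U*l" 0] l by simp
  then show "k dvd U"
    using \<open>0 < l\<close> by (simp add: mod_eq_0_iff_dvd)
  then obtain g where g: "U = k * g" by blast
  have "coprime l g" \<comment> \<open>a common factor of \<open>l\<close> and \<open>g\<close> would give an earlier return\<close>
  proof -
    obtain q l' g' where q: "q = gcd l g" "l = q * l'" "g = q * g'"
      by (metis dvd_def gcd_dvd1 gcd_dvd2)
    have "U * l' = M * g'"
      using g l q(2,3) by simp
    then have "(y^^(k*l')) p = (x^^(M*g')) p"
      using funpow_mult_return[OF comm k_return, of l'] by simp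
    also have "\<dots> = (y^^0) p"
      using x_period[of "M*g'" 0] by simp
    finally have "(k * l') mod (k * l) = 0"
      using y_period[of "k*l'" 0] l by simp
    then have "q * l' dvd l'" using \<open>0 < k\<close> q(2) by (simp add: mod_eq_0_iff_dvd)
    then have "q = 1" using \<open>0 < l\<close> q(2) by simp
    then show ?thesis using q(1) by (simp add: coprime_iff_gcd_eq_1)
  qed
  then show "coprime (M div k) (U div k)" using l g \<open>0 < k\<close> by simp
  obtain c where c: "(g * c) mod l = 1 mod l"
    using coprime_mod_inverse_nat[OF \<open>coprime l g\<close>] by blast
  have "(U*c) mod M = k * ((g*c) mod l)"
    unfolding l g by (simp only: mult.assoc mod_mult_mult1)
  also have "\<dots> = k mod M"
    unfolding l c by (simp only: mod_mult_mult1[symmetric] mult_1_right)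
  finally have "(U*c) mod M = k mod M" .
  then have "(y^^(k*c)) p = (x^^k) p"
    using funpow_mult_return[OF comm k_return, of c] x_period by simp
  then show "\<exists>c. (x^^k) p = (y^^c) p" by metis
qed

lemma commuting_first_returns:
  fixes x y :: "'a \<Rightarrow> 'a"
  assumes comm: "x \<circ> y = y \<circ> x" and M: "0 < M"
    and x_period: "\<And>a b. (x^^a) p = (x^^b) p \<longleftrightarrow> a mod M = b mod M"
    and y_period: "\<And>a b. (y^^a) p = (y^^b) p \<longleftrightarrow> a mod M = b mod M"
    and y_return: "\<And>b. (\<exists>a. (y^^b) p = (x^^a) p) \<longleftrightarrow> k dvd b"
    and k_return: "(y^^k) p = (x^^U) p"
    and x_return: "\<And>a. (\<exists>b. (x^^a) p = (y^^b) p) \<longleftrightarrow> k' dvd a"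
    and k'_return: "(x^^k') p = (y^^U') p"
  shows "k' = k" "k dvd U'" "(U div k) * (U' div k) mod (M div k) = 1 mod (M div k)"
proof -
  note xy = commuting_first_return[OF comm M x_period y_period y_return k_return]
  note yx = commuting_first_return[OF comm[symmetric] M y_period x_period x_return k'_return]
  show "k' = k"
    using xy(4) yx(4) x_return y_return by (metis dvd_antisym)
  then show "k dvd U'" using yx(2) by simp
  then obtain l g b where l: "M = k * l" and g: "U = k * g" and b: "U' = k * b"
    using xy(1,2) by (metis dvd_def)
  with M have "0 < k" by auto
  have "(x^^k) p = (x^^(U*b)) p"
    using k'_return funpow_mult_return[OF comm k_return, of b] b \<open>k' = k\<close> by simp
  then have "k * (1 mod l) = k * ((g * b) mod l)"
    using x_period l g mod_mult_mult1[of k 1 l] mod_mult_mult1[of k "g*b" l]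
    by (simp add: ac_simps)
  then show "(U div k) * (U' div k) mod (M div k) = 1 mod (M div k)"
    using l g b \<open>0 < k\<close> by simp
qed

lemma even_add_of_coprime_quotients:
  fixes k M U :: nat
  assumes "even M" "k dvd M" "k dvd U" "coprime (M div k) (U div k)"
  shows "even (U + k)"
proof (cases "even k")
  case True
  then show ?thesis using assms(3) by auto
next
  case False
  then have "even (M div k)" using assms(1,2) by (metis dvd_mult_div_cancel even_mult_iff)
  then have "odd (U div k)" using assms(4) by (metis coprime_common_divisor_nat even_numeral odd_one)
  moreover have "U = k * (U div k)" using assms(3) by simp
  ultimately show ?thesis using False by (metis even_mult_iff odd_add)
qed

lemma four_dvd_mult_diff_if_unit_product:
  fixes k l g b :: int
  assumes kl: "4 dvd k * l" and gb: "l dvd g * b - 1"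
  shows "4 dvd k * (g - b)"
proof (cases "even g")
  case True
  have "odd l"
  proof
    assume "even l"
    then have "even (g * b - 1)" using gb by (rule dvd_trans)
    then show False using True by simp
  qed
  then have "coprime 4 l"
    by (metis coprime_power_left_iff coprime_left_2_iff_odd power2_eq_square numeral_Bit0_eq_double)
  then have "4 dvd k" using kl coprime_dvd_mult_left_iff by blast
  then show ?thesis by simp
next
  case False
  then obtain q where "g = 2 * q + 1" by (metis oddE)
  then have "g * g - 1 = 4 * (q * q + q)" by (simp add: algebra_simps)
  then have g2: "4 dvd g * g - 1" by simp
  have "4 dvd k * (g * b - 1)"
    using kl mult_dvd_mono[OF dvd_refl gb] by (rule dvd_trans)
  moreover have "k * (g - b) = k * b * (g * g - 1) - g * (k * (g * b - 1))"
    by (simp add: algebra_simps)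
  ultimately show ?thesis using g2 by simp
qed

section \<open>Sums along the cycles of a permutation\<close>

lemma permutes_funpow_in:
  assumes "\<tau> permutes S" "j \<in> S"
  shows "(\<tau>^^b) j \<in> S"
  using assms(2) by (rule permutes_in_image[OF permutes_funpow[OF assms(1)], THEN iffD2])

lemma least_power_apply:
  assumes "permutation \<tau>"
  shows "least_power \<tau> (\<tau> j) = least_power \<tau> j"
proof -
  have inj: "inj \<tau>" using bij_is_inj[OF permutation_bijective[OF assms]] .
  have "(\<tau>^^b) (\<tau> j) = \<tau> ((\<tau>^^b) j)" for b by (simp add: funpow_swap1)
  then have "(\<tau>^^b) (\<tau> j) = \<tau> j \<longleftrightarrow> (\<tau>^^b) j = j" for b
    by (simp add: inj_eq[OF inj])
  then show ?thesis
    using least_power_dvd[OF assms] by (metis dvd_antisym dvd_refl)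
qed

definition path_sum :: "('a \<Rightarrow> 'a) \<Rightarrow> ('a \<Rightarrow> nat) \<Rightarrow> nat \<Rightarrow> 'a \<Rightarrow> nat" where
  "path_sum \<tau> a b j = (\<Sum>l=1..b. a ((\<tau>^^l) j))"

lemma path_sum_add: "path_sum \<tau> a (b + c) j = path_sum \<tau> a b j + path_sum \<tau> a c ((\<tau>^^b) j)"
proof (induction c)
  case (Suc c)
  have "(\<tau>^^(b + Suc c)) j = (\<tau>^^Suc c) ((\<tau>^^b) j)"
    by (metis add.commute comp_apply funpow_add)
  with Suc show ?case by (simp add: path_sum_def)
qed (simp add: path_sum_def)

lemma path_sum_mult_period:
  assumes "(\<tau>^^k) j = j"
  shows "path_sum \<tau> a (m * k) j = m * path_sum \<tau> a k j"
proof (induction m)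
  case (Suc m)
  then show ?case using path_sum_add[of \<tau> a k "m*k" j] assms by (simp add: add.commute)
qed (simp add: path_sum_def)

lemma path_sum_least_power_apply:
  assumes "permutation \<tau>"
  shows "path_sum \<tau> a (least_power \<tau> (\<tau> j)) (\<tau> j) = path_sum \<tau> a (least_power \<tau> j) j"
proof -
  define k where "k = least_power \<tau> j"
  have k: "(\<tau>^^k) j = j" using least_power_of_permutation(1)[OF assms] by (simp add: k_def)
  have "path_sum \<tau> a 1 j + path_sum \<tau> a k (\<tau> j) = path_sum \<tau> a k j + path_sum \<tau> a 1 j"
    using path_sum_add[of \<tau> a 1 k j] path_sum_add[of \<tau> a k 1 j] k by (simp add: add.commute)
  then show ?thesis using least_power_apply[OF assms] by (simp add: k_def)
qed

lemma sum_eq_sum_cycle_means: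
  assumes perm: "\<tau> permutes S" and fin: "finite S"
    and dvd: "\<forall>j\<in>S. least_power \<tau> j dvd path_sum \<tau> a (least_power \<tau> j) j"
  shows "(\<Sum>j\<in>S. a j) = (\<Sum>j\<in>S. path_sum \<tau> a (least_power \<tau> j) j div least_power \<tau> j)"
proof -
  have \<tau>: "permutation \<tau>" using permutes_imp_permutation[OF fin perm] .
  obtain N where N: "\<tau>^^N = id" "0 < N" using permutation_is_nilpotent[OF \<tau>] by blast
  \<comment> \<open>a path of length \<open>N\<close> winds \<open>N / k\<close> times around the cycle of its start,
    and the paths from all starts visit every point \<open>N\<close> times\<close>
  have "(\<Sum>j\<in>S. path_sum \<tau> a N j) = (\<Sum>l=1..N. \<Sum>j\<in>S. a ((\<tau>^^l) j))"
    unfolding path_sum_def by (rule sum.swap)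
  also have "\<dots> = N * (\<Sum>j\<in>S. a j)"
    using sum.permute[OF permutes_funpow[OF perm], of a] by (simp add: comp_def)
  finally have total: "(\<Sum>j\<in>S. path_sum \<tau> a N j) = N * (\<Sum>j\<in>S. a j)" .
  have "path_sum \<tau> a N j = N * (path_sum \<tau> a (least_power \<tau> j) j div least_power \<tau> j)"
    if "j \<in> S" for j
  proof -
    have "least_power \<tau> j dvd N" using least_power_dvd[OF \<tau>, of j N] N(1) by simp
    then obtain m where m: "N = m * least_power \<tau> j" by (metis dvd_def mult.commute)
    show ?thesis
      using path_sum_mult_period[OF least_power_of_permutation(1)[OF \<tau>], of a m] m dvd that
      by auto
  qed
  then have "(\<Sum>j\<in>S. path_sum \<tau> a N j)
      = N * (\<Sum>j\<in>S. path_sum \<tau> a (least_power \<tau> j) j div least_power \<tau> j)"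
    by (simp add: sum_distrib_left)
  with total N(2) show ?thesis by simp
qed

lemma permutation_orbit_preimage:
  assumes "permutation \<tau>" "\<tau> x \<in> range (\<lambda>i. (\<tau>^^i) j)"
  shows "x \<in> range (\<lambda>i. (\<tau>^^i) j)"
proof -
  obtain i where i: "\<tau> x = (\<tau>^^i) j" using assms(2) by auto
  obtain N where N: "\<tau>^^N = id" "0 < N" using permutation_is_nilpotent[OF assms(1)] by blast
  then obtain N' where "N = Suc N'" using not0_implies_Suc by blast
  then have "x = (\<tau>^^N') (\<tau> x)"
    using fun_cong[OF N(1), of x] by (metis comp_apply funpow_Suc_right id_apply)
  also have "\<dots> = (\<tau>^^(N' + i)) j"
    using i by (simp add: funpow_add)
  finally show ?thesis by blast
qed

lemma sum_dvd_of_cycle_multiples: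
  fixes \<tau> :: "'a \<Rightarrow> 'a" and h :: "'a \<Rightarrow> 'b::comm_semiring_1"
  assumes \<tau>: "permutation \<tau>" and "finite S" "\<tau> ` S \<subseteq> S"
    and "\<forall>j\<in>S. h (\<tau> j) = h j" "\<forall>j\<in>S. m dvd of_nat (least_power \<tau> j) * h j"
  shows "m dvd sum h S"
  using assms(2-)
proof (induction "card S" arbitrary: S rule: less_induct)
  case less
  show ?case
  proof (cases "S = {}")
    case False
    then obtain j where j: "j \<in> S" by blast
    define k where "k = least_power \<tau> j"
    define C where "C = (\<lambda>i. (\<tau>^^i) j) ` {0..<k}"
    have "distinct (map (\<lambda>i. (\<tau>^^i) j) [0..<k])"
      using cycle_of_permutation[OF \<tau>, of j] by (simp add: k_def)
    then have inj: "inj_on (\<lambda>i. (\<tau>^^i) j) {0..<k}"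
      by (simp add: distinct_map)
    have C_range: "C = range (\<lambda>i. (\<tau>^^i) j)"
      using support_set[OF \<tau>, of j] by (simp add: C_def k_def)
    have in_S: "(\<tau>^^i) j \<in> S" for i
      using j less.prems(2) by (induction i) auto
    have h_const: "h ((\<tau>^^i) j) = h j" for i
      using less.prems(3) in_S by (induction i) auto
    have "sum h C = of_nat k * h j"
      unfolding C_def using inj h_const by (simp add: sum.reindex)
    then have m_C: "m dvd sum h C"
      using less.prems(4) j by (simp add: k_def)
    have C_S: "C \<subseteq> S" using in_S C_range by auto
    have closed: "\<tau> ` (S - C) \<subseteq> S - C"
      using less.prems(2) permutation_orbit_preimage[OF \<tau>] by (auto simp: C_range)
    have "j \<in> C" using C_range by (auto intro: range_eqI[of _ _ 0])
    then have "card (S - C) < card S"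
      using j less.prems(1) by (intro psubset_card_mono) auto
    then have "m dvd sum h (S - C)"
      using less.prems closed by (intro less.hyps) auto
    then show ?thesis
      using m_C sum.subset_diff[OF C_S less.prems(1), of h] by simp
  qed simp
qed

section \<open>The blocks of \<open>\<pi>\<close> and its centralizer\<close>

text \<open>\<open>block_point r j i\<close>, for \<open>i < 2r\<close>, is the \<open>i\<close>-th point of the support of \<open>A\<^sub>j\<close>
  (counting from \<open>0\<close>), which \<open>A\<^sub>j\<close> maps to the \<open>(i+1) mod 2r\<close>-th.\<close>

definition block_point :: "nat \<Rightarrow> nat \<Rightarrow> nat \<Rightarrow> nat" where
  "block_point r j i = 2*r*(j-1) + i + 1"

definition block :: "nat \<Rightarrow> nat \<Rightarrow> nat" where
  "block r x = (x - 1) div (2*r) + 1"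

lemma block_block_point [simp]:
  assumes "1 \<le> j" "i < 2*r"
  shows "block r (block_point r j i) = j"
  using assms by (simp add: block_def block_point_def)

lemma block_point_eq_iff:
  assumes "1 \<le> j" "1 \<le> j'" "i < 2*r" "i' < 2*r"
  shows "block_point r j i = block_point r j' i' \<longleftrightarrow> j = j' \<and> i = i'"
proof
  assume eq: "block_point r j i = block_point r j' i'"
  then have "j = j'"
    using assms block_block_point by metis
  with eq show "j = j' \<and> i = i'"
    by (simp add: block_point_def)
qed simp

lemma in_block_iff:
  assumes "1 \<le> j" "1 \<le> j'" "i < 2*r"
  shows "2*r*(j-1) < block_point r j' i \<and> block_point r j' i \<le> 2*r*j \<longleftrightarrow> j' = j"
proof
  assume "2*r*(j-1) < block_point r j' i \<and> block_point r j' i \<le> 2*r*j"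
  then have "(block_point r j' i - 1) div (2*r) = j - 1"
    using assms(1) by (intro div_nat_eqI) (auto simp: block_point_def algebra_simps)
  then show "j' = j"
    using assms block_block_point[of j' i r] unfolding block_def by simp
next
  assume "j' = j"
  then show "2*r*(j-1) < block_point r j' i \<and> block_point r j' i \<le> 2*r*j"
    using assms by (cases j) (auto simp: block_point_def)
qed

lemma block_point_in_points:
  assumes "j \<in> {1..n}" "i < 2*r"
  shows "block_point r j i \<in> {1..2*r*n}"
proof -
  have "2*r*(j-1) + 2*r \<le> 2*r*n"
    using assms mult_le_mono2[of j n "2*r"] by (cases j) (auto simp: algebra_simps)
  then show ?thesis using assms by (simp add: block_point_def)
qed

lemma points_cases:
  assumes "x \<in> {1..2*r*n}" "0 < r"
  obtains j i where "j \<in> {1..n}" "i < 2*r" "x = block_point r j i"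
proof
  show "(x - 1) mod (2*r) < 2*r" using assms(2) by simp
  show "x = block_point r ((x - 1) div (2*r) + 1) ((x - 1) mod (2*r))"
    using assms(1) by (simp add: block_point_def)
  have "x - 1 < n * (2*r)"
    using assms(1) by (auto simp: mult.commute)
  then have "(x - 1) div (2*r) < n"
    by (rule less_mult_imp_div_less)
  then show "(x - 1) div (2*r) + 1 \<in> {1..n}" by simp
qed

lemma block_in_blocks:
  assumes "0 < r" "x \<in> {1..2*r*n}"
  shows "block r x \<in> {1..n}"
proof -
  obtain j i where "j \<in> {1..n}" "i < 2*r" "x = block_point r j i"
    using points_cases[OF assms(2,1)] .
  then show ?thesis by simp
qed

lemma sum_points:
  fixes f :: "nat \<Rightarrow> 'a::comm_monoid_add"
  assumes "0 < r"
  shows "(\<Sum>p\<in>{1..2*r*n}. f p) = (\<Sum>j=1..n. \<Sum>i<2*r. f (block_point r j i))"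
proof -
  have inj: "inj_on (\<lambda>(j, i). block_point r j i) ({1..n} \<times> {..<2*r})"
    by (auto simp: inj_on_def block_point_eq_iff)
  have "(\<lambda>(j, i). block_point r j i) ` ({1..n} \<times> {..<2*r}) = {1..2*r*n}"
  proof
    show "(\<lambda>(j, i). block_point r j i) ` ({1..n} \<times> {..<2*r}) \<subseteq> {1..2*r*n}"
      using block_point_in_points by auto
    show "{1..2*r*n} \<subseteq> (\<lambda>(j, i). block_point r j i) ` ({1..n} \<times> {..<2*r})"
    proof
      fix p assume "p \<in> {1..2*r*n}"
      then obtain j i where "j \<in> {1..n}" "i < 2*r" "p = block_point r j i"
        using points_cases[OF _ assms] by blast
      then show "p \<in> (\<lambda>(j, i). block_point r j i) ` ({1..n} \<times> {..<2*r})" by force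
    qed
  qed
  then have "(\<Sum>p\<in>{1..2*r*n}. f p) = (\<Sum>(j, i)\<in>{1..n} \<times> {..<2*r}. f (block_point r j i))"
    using sum.reindex[OF inj, of f] by (simp add: case_prod_unfold)
  then show ?thesis by (simp add: sum.cartesian_product)
qed

lemma cycA_block_point:
  assumes "1 \<le> j" "1 \<le> j'" "i < 2*r"
  shows "cycA r j (block_point r j' i)
    = (if j' = j then block_point r j ((i + 1) mod (2*r)) else block_point r j' i)"
proof (cases "j' = j")
  case True
  then show ?thesis
    using assms in_block_iff[OF assms]
    by (cases j) (auto simp: cycA_def block_point_def)
next
  case False
  then have "\<not> (2*r*(j-1) < block_point r j' i \<and> block_point r j' i \<le> 2*r*j)"
    using in_block_iff[OF assms] by simp
  then show ?thesis
    using False unfolding cycA_def by (subst if_not_P) simp_all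
qed

lemma cycA_funpow_block_point:
  assumes "1 \<le> j" "1 \<le> j'" "i < 2*r"
  shows "(cycA r j ^^ c) (block_point r j' i)
    = (if j' = j then block_point r j ((i + c) mod (2*r)) else block_point r j' i)"
proof (induction c)
  case (Suc c)
  have "(i + c) mod (2*r) < 2*r" using assms(3) by simp
  then show ?case
    using Suc cycA_block_point[OF assms(1,1)] cycA_block_point[OF assms]
    by (auto simp: mod_Suc_eq)
qed (use assms in auto)

lemma foldr_cycA_funpow_block_point:
  assumes "distinct js" "\<forall>j\<in>set js. 1 \<le> j" "1 \<le> j'" "i < 2*r"
  shows "foldr (\<lambda>j f. (cycA r j ^^ a j) \<circ> f) js id (block_point r j' i)
    = (if j' \<in> set js then block_point r j' ((i + a j') mod (2*r)) else block_point r j' i)"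
  using assms(1,2)
proof (induction js)
  case (Cons j js)
  have "(i + a j') mod (2*r) < 2*r" using assms(4) by simp
  then show ?case
    using Cons cycA_funpow_block_point[of j j' _ r] assms(3,4) by auto
qed simp

lemma Apow_prod_block_point:
  assumes "j \<in> {1..n}" "i < 2*r"
  shows "Apow_prod r n a (block_point r j i) = block_point r j ((i + a j) mod (2*r))"
  using foldr_cycA_funpow_block_point[of "[1..<n+1]" j i r a] assms
  by (simp add: Apow_prod_def)

lemma invB_block_point:
  assumes "1 \<le> k" "1 \<le> j" "i < 2*r"
  shows "invB r k (block_point r j i) = block_point r (Transposition.transpose k (k+1) j) i"
  using in_block_iff[of k j i r] in_block_iff[of "k+1" j i r] assms
  by (cases k) (auto simp: invB_def block_point_def transpose_def algebra_simps)

lemma Bgroup_block_point: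
  assumes "B \<in> Bgroup r n"
  obtains \<tau> where "\<tau> permutes {1..n}"
    "\<forall>j\<in>{1..n}. \<forall>i<2*r. B (block_point r j i) = block_point r (\<tau> j) i"
proof -
  have "\<exists>\<tau>. \<tau> permutes {1..n} \<and> (\<forall>j\<in>{1..n}. \<forall>i<2*r. B (block_point r j i) = block_point r (\<tau> j) i)"
    using assms
  proof (induction rule: Bgroup.induct)
    case Bid
    show ?case by (intro exI[of _ id] conjI permutes_id) simp
  next
    case (Bstep B k)
    then obtain \<tau> where \<tau>: "\<tau> permutes {1..n}"
      "\<forall>j\<in>{1..n}. \<forall>i<2*r. B (block_point r j i) = block_point r (\<tau> j) i" by blast
    have "Transposition.transpose k (k+1) permutes {1..n}"
      using Bstep.hyps by (intro permutes_swap_id) auto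
    then have perm: "Transposition.transpose k (k+1) \<circ> \<tau> permutes {1..n}"
      by (rule permutes_compose[OF \<tau>(1)])
    have "1 \<le> \<tau> j" if "j \<in> {1..n}" for j
      using permutes_in_image[OF \<tau>(1)] that by auto
    then show ?case
      using \<tau>(2) invB_block_point[OF Bstep.hyps(2)]
      by (intro exI[of _ "Transposition.transpose k (k+1) \<circ> \<tau>"] conjI[OF perm]) auto
  qed
  then show thesis using that by blast
qed

text \<open>The action of \<open>A\<^sub>1\<^bsup>a\<^sub>1\<^esup> \<cdots> A\<^sub>n\<^bsup>a\<^sub>n\<^esup> B\<close> when \<open>B\<close> moves block \<open>j\<close> onto block \<open>\<tau> j\<close>.\<close>

definition block_action :: "nat \<Rightarrow> nat \<Rightarrow> (nat \<Rightarrow> nat) \<Rightarrow> (nat \<Rightarrow> nat) \<Rightarrow> (nat \<Rightarrow> nat) \<Rightarrow> bool" where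
  "block_action r n y \<tau> a \<longleftrightarrow> \<tau> permutes {1..n} \<and>
     (\<forall>j\<in>{1..n}. \<forall>i<2*r. y (block_point r j i) = block_point r (\<tau> j) ((i + a (\<tau> j)) mod (2*r)))"

lemma block_action_Apow_prod_Bgroup:
  assumes "B \<in> Bgroup r n"
  obtains \<tau> where "block_action r n (Apow_prod r n a \<circ> B) \<tau> a"
proof -
  obtain \<tau> where \<tau>: "\<tau> permutes {1..n}"
    "\<forall>j\<in>{1..n}. \<forall>i<2*r. B (block_point r j i) = block_point r (\<tau> j) i"
    using Bgroup_block_point[OF assms] by blast
  have "\<tau> j \<in> {1..n}" if "j \<in> {1..n}" for j
    using that by (rule permutes_in_image[OF \<tau>(1), THEN iffD2])
  then have "block_action r n (Apow_prod r n a \<circ> B) \<tau> a"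
    using \<tau> Apow_prod_block_point by (simp add: block_action_def)
  then show thesis by (rule that)
qed

lemma block_action_piperm: "block_action r n (piperm r n) id (\<lambda>_. 1)"
  by (simp add: block_action_def piperm_def Apow_prod_block_point)

lemma block_action_funpow:
  assumes y: "block_action r n y \<tau> a" and "j \<in> {1..n}" "i < 2*r"
  shows "(y^^b) (block_point r j i) = block_point r ((\<tau>^^b) j) ((i + path_sum \<tau> a b j) mod (2*r))"
proof (induction b)
  case (Suc b)
  have perm: "\<tau> permutes {1..n}" and step: "\<And>j i. j \<in> {1..n} \<Longrightarrow> i < 2*r \<Longrightarrow>
      y (block_point r j i) = block_point r (\<tau> j) ((i + a (\<tau> j)) mod (2*r))"
    using y by (auto simp: block_action_def)
  define c where "c = (i + path_sum \<tau> a b j) mod (2*r)"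
  have "(\<tau>^^b) j \<in> {1..n}"
    using perm assms(2) by (rule permutes_funpow_in)
  moreover have "c < 2*r" using assms(3) by (simp add: c_def)
  ultimately have "(y^^Suc b) (block_point r j i)
      = block_point r ((\<tau>^^Suc b) j) ((c + a ((\<tau>^^Suc b) j)) mod (2*r))"
    using Suc step by (simp add: c_def)
  also have "(c + a ((\<tau>^^Suc b) j)) mod (2*r) = (i + path_sum \<tau> a (Suc b) j) mod (2*r)"
    by (simp add: c_def path_sum_def mod_add_left_eq add.assoc)
  finally show ?case .
qed (use assms(3) in \<open>simp add: path_sum_def\<close>)

lemma piperm_funpow:
  assumes "j \<in> {1..n}" "i < 2*r"
  shows "(piperm r n ^^ b) (block_point r j i) = block_point r j ((i + b) mod (2*r))"
  using block_action_funpow[OF block_action_piperm assms] by (simp add: path_sum_def)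

lemma block_action_block:
  assumes y: "block_action r n y \<tau> a" and x: "x \<in> {1..2*r*n}" and "0 < r"
  shows "y x \<in> {1..2*r*n}" "block r (y x) = \<tau> (block r x)"
proof -
  obtain j i where j: "j \<in> {1..n}" and i: "i < 2*r" and x_eq: "x = block_point r j i"
    using points_cases[OF x \<open>0 < r\<close>] .
  have "\<tau> permutes {1..n}" using y by (simp add: block_action_def)
  then have \<tau>j: "\<tau> j \<in> {1..n}"
    using j by (rule permutes_in_image[THEN iffD2])
  have c: "(i + a (\<tau> j)) mod (2*r) < 2*r" using i by simp
  have y_x: "y x = block_point r (\<tau> j) ((i + a (\<tau> j)) mod (2*r))"
    using y j i unfolding x_eq block_action_def by blast
  show "y x \<in> {1..2*r*n}"
    unfolding y_x using \<tau>j c by (rule block_point_in_points)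
  show "block r (y x) = \<tau> (block r x)"
    using \<tau>j c j i by (simp add: x_eq y_x[unfolded x_eq])
qed

lemma block_action_return_iff:
  assumes y: "block_action r n y \<tau> a" and j: "j \<in> {1..n}" and i: "i < 2*r"
  shows "(\<exists>c. (y^^b) (block_point r j i) = (piperm r n ^^ c) (block_point r j i))
    \<longleftrightarrow> least_power \<tau> j dvd b"
proof -
  have perm: "\<tau> permutes {1..n}" using y by (simp add: block_action_def)
  then have \<tau>b: "(\<tau>^^b) j \<in> {1..n}"
    using j by (rule permutes_funpow_in)
  define c where "c = (i + path_sum \<tau> a b j) mod (2*r)"
  have "c < 2*r" using i by (simp add: c_def)
  have "(\<exists>c'. block_point r ((\<tau>^^b) j) c = block_point r j ((i + c') mod (2*r)))
      \<longleftrightarrow> (\<tau>^^b) j = j"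
  proof
    assume "\<exists>c'. block_point r ((\<tau>^^b) j) c = block_point r j ((i + c') mod (2*r))"
    then show "(\<tau>^^b) j = j"
      using block_point_eq_iff[of "(\<tau>^^b) j" j c r] \<tau>b j \<open>c < 2*r\<close> i by auto
  next
    assume "(\<tau>^^b) j = j"
    moreover have "(i + (c + 2*r - i)) mod (2*r) = c" using i \<open>c < 2*r\<close> by simp
    ultimately show "\<exists>c'. block_point r ((\<tau>^^b) j) c = block_point r j ((i + c') mod (2*r))"
      by metis
  qed
  then have "(\<exists>c. (y^^b) (block_point r j i) = (piperm r n ^^ c) (block_point r j i))
      \<longleftrightarrow> (\<tau>^^b) j = j"
    unfolding block_action_funpow[OF y j i] piperm_funpow[OF j i] c_def[symmetric] .
  also have "\<dots> \<longleftrightarrow> least_power \<tau> j dvd b"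
    using least_power_dvd[OF permutes_imp_permutation[OF _ perm]] by simp
  finally show ?thesis .
qed

lemma piperm_period:
  assumes "0 < r" "p \<in> {1..2*r*n}"
  shows "(piperm r n ^^ a) p = (piperm r n ^^ b) p \<longleftrightarrow> a mod (2*r) = b mod (2*r)"
proof -
  obtain j i where "j \<in> {1..n}" "i < 2*r" "p = block_point r j i"
    using points_cases[OF assms(2,1)] .
  then show ?thesis by (simp add: piperm_funpow block_point_eq_iff nat_mod_eq_iff)
qed

lemma piperm_block:
  assumes "0 < r" "p \<in> {1..2*r*n}"
  shows "piperm r n p \<in> {1..2*r*n}" "block r (piperm r n p) = block r p"
  using block_action_block[OF block_action_piperm assms(2,1)] by simp_all

lemma piperm_invariant_block_point:
  assumes "0 < r" "\<forall>p\<in>{1..2*r*n}. f (piperm r n p) = f p" "j \<in> {1..n}" "i < 2*r"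
  shows "f (block_point r j i) = f (block_point r j 0)"
  using assms(4)
proof (induction i)
  case (Suc i)
  have "piperm r n (block_point r j i) = block_point r j (Suc i)"
    using piperm_funpow[OF assms(3) _, of i r 1] Suc.prems by simp
  moreover have "block_point r j i \<in> {1..2*r*n}"
    using block_point_in_points[OF assms(3)] Suc.prems by simp
  ultimately show ?case using Suc assms(2) by fastforce
qed simp

lemma sum_points_piperm_invariant:
  fixes f :: "nat \<Rightarrow> 'a::comm_semiring_1"
  assumes "0 < r" "\<forall>p\<in>{1..2*r*n}. f (piperm r n p) = f p"
  shows "(\<Sum>p\<in>{1..2*r*n}. f p) = of_nat (2*r) * (\<Sum>j=1..n. f (block_point r j 0))"
proof -
  have "(\<Sum>j=1..n. \<Sum>i<2*r. f (block_point r j i)) = (\<Sum>j=1..n. \<Sum>i<2*r. f (block_point r j 0))"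
    by (intro sum.cong refl piperm_invariant_block_point[OF assms]) auto
  then show ?thesis
    unfolding sum_points[OF assms(1)] by (simp add: sum_distrib_left)
qed

section \<open>Conjugates of \<open>\<pi>\<close> commuting with \<open>\<pi>\<close>\<close>

locale centralizing_conjugate =
  fixes r n :: nat and g t \<tau> d :: "nat \<Rightarrow> nat"
  assumes r_pos: "0 < r"
    and g_permutes: "g permutes {1..2*r*n}"
    and conj: "g \<circ> piperm r n = t \<circ> g"
    and commute: "piperm r n \<circ> t = t \<circ> piperm r n"
    and action: "block_action r n t \<tau> d"
begin

definition cycle_rotation :: "nat \<Rightarrow> nat" where
  "cycle_rotation j = path_sum \<tau> d (least_power \<tau> j) j"

definition mean_rotation :: "nat \<Rightarrow> nat" where
  "mean_rotation j = cycle_rotation j div least_power \<tau> j"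

lemma permutes_blocks: "\<tau> permutes {1..n}"
  using action by (simp add: block_action_def)

lemma permutation: "permutation \<tau>"
  using permutes_imp_permutation[OF _ permutes_blocks] by simp

lemma inv_g_in_points: "p \<in> {1..2*r*n} \<Longrightarrow> inv g p \<in> {1..2*r*n}"
  by (rule permutes_in_image[OF permutes_inv[OF g_permutes], THEN iffD2])

lemma t_funpow: "(t^^a) p = g ((piperm r n ^^ a) (inv g p))"
  using funpow_conj_apply[OF conj, of a "inv g p"] permutes_inverses(1)[OF g_permutes] by simp

lemma t_period:
  assumes "p \<in> {1..2*r*n}"
  shows "(t^^a) p = (t^^b) p \<longleftrightarrow> a mod (2*r) = b mod (2*r)"
  using piperm_period[OF r_pos inv_g_in_points[OF assms]] permutes_inj[OF g_permutes]
  by (simp add: t_funpow inj_eq)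

lemma return_iff:
  assumes "p \<in> {1..2*r*n}"
  shows "(\<exists>c. (t^^b) p = (piperm r n ^^ c) p) \<longleftrightarrow> least_power \<tau> (block r p) dvd b"
proof -
  obtain j i where "j \<in> {1..n}" "i < 2*r" "p = block_point r j i"
    using points_cases[OF assms r_pos] .
  then show ?thesis using block_action_return_iff[OF action] by simp
qed

lemma cycle_return:
  assumes "p \<in> {1..2*r*n}"
  shows "(t^^least_power \<tau> (block r p)) p = (piperm r n ^^ cycle_rotation (block r p)) p"
proof -
  obtain j i where j: "j \<in> {1..n}" and i: "i < 2*r" and p: "p = block_point r j i"
    using points_cases[OF assms r_pos] .
  have "(\<tau>^^least_power \<tau> j) j = j"
    by (rule least_power_of_permutation(1)[OF permutation])
  then show ?thesis
    using j i by (simp add: p block_action_funpow[OF action j i] piperm_funpow cycle_rotation_def)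
qed

lemma first_return:
  assumes "j \<in> {1..n}"
  shows "least_power \<tau> j dvd 2*r" "least_power \<tau> j dvd cycle_rotation j"
    "coprime (2*r div least_power \<tau> j) (cycle_rotation j div least_power \<tau> j)"
proof -
  define p where "p = block_point r j 0"
  have p: "p \<in> {1..2*r*n}" "block r p = j"
    using block_point_in_points[OF assms] assms r_pos by (simp_all add: p_def)
  note first = commuting_first_return[OF commute _ piperm_period[OF r_pos p(1)] t_period[OF p(1)]
      return_iff[OF p(1)] cycle_return[OF p(1)]]
  show "least_power \<tau> j dvd 2*r" "least_power \<tau> j dvd cycle_rotation j"
    "coprime (2*r div least_power \<tau> j) (cycle_rotation j div least_power \<tau> j)"
    using first(1-3) r_pos p(2) by simp_all
qed

lemma cycle_rotation_apply: "cycle_rotation (\<tau> j) = cycle_rotation j"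
  unfolding cycle_rotation_def by (rule path_sum_least_power_apply[OF permutation])

lemma mean_rotation_apply: "mean_rotation (\<tau> j) = mean_rotation j"
  by (simp add: mean_rotation_def cycle_rotation_apply least_power_apply[OF permutation])

lemma sum_mean_rotation: "(\<Sum>j=1..n. mean_rotation j) = (\<Sum>j=1..n. d j)"
  using sum_eq_sum_cycle_means[OF permutes_blocks finite_atLeastAtMost, of d] first_return(2)
  by (simp add: mean_rotation_def cycle_rotation_def)

lemma sum_rotation_parity: "even ((\<Sum>j=1..n. d j) + n)"
proof -
  have "even (\<Sum>j=1..n. mean_rotation j + 1)"
  proof (rule sum_dvd_of_cycle_multiples[OF permutation])
    show "\<tau> ` {1..n} \<subseteq> {1..n}" using permutes_image[OF permutes_blocks] by simp
    show "\<forall>j\<in>{1..n}. mean_rotation (\<tau> j) + 1 = mean_rotation j + 1"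
      by (simp add: mean_rotation_apply)
    show "\<forall>j\<in>{1..n}. 2 dvd of_nat (least_power \<tau> j) * (mean_rotation j + 1)"
    proof
      fix j assume j: "j \<in> {1..n}"
      have "least_power \<tau> j * (mean_rotation j + 1) = cycle_rotation j + least_power \<tau> j"
        using first_return(2)[OF j] by (simp add: mean_rotation_def algebra_simps)
      moreover have "even (cycle_rotation j + least_power \<tau> j)"
        using even_add_of_coprime_quotients[OF _ first_return[OF j]] by simp
      ultimately show "2 dvd of_nat (least_power \<tau> j) * (mean_rotation j + 1)" by simp
    qed
  qed simp
  also have "(\<Sum>j=1..n. mean_rotation j + 1) = (\<Sum>j=1..n. d j) + n"
    unfolding sum.distrib sum_mean_rotation by simp
  finally show ?thesis .
qed

lemma mean_rotation_conjugate_piperm: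
  assumes "p \<in> {1..2*r*n}"
  shows "mean_rotation (block r (g (piperm r n p))) = mean_rotation (block r (g p))"
proof -
  have "g p \<in> {1..2*r*n}"
    using assms by (rule permutes_in_image[OF g_permutes, THEN iffD2])
  then have "block r (t (g p)) = \<tau> (block r (g p))"
    by (rule block_action_block(2)[OF action _ r_pos])
  then show ?thesis
    using fun_cong[OF conj, of p] by (simp add: mean_rotation_apply)
qed

lemma sum_mean_rotation_conjugate:
  "(\<Sum>j=1..n. mean_rotation (block r (g (block_point r j 0)))) = (\<Sum>j=1..n. d j)"
proof -
  have "2*r * (\<Sum>j=1..n. mean_rotation (block r (g (block_point r j 0))))
      = (\<Sum>p\<in>{1..2*r*n}. mean_rotation (block r (g p)))"
    using sum_points_piperm_invariant[OF r_pos, where f="\<lambda>p. mean_rotation (block r (g p))"]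
      mean_rotation_conjugate_piperm by simp
  also have "\<dots> = (\<Sum>p\<in>{1..2*r*n}. mean_rotation (block r p))"
    using sum.permute[OF g_permutes, of "\<lambda>p. mean_rotation (block r p)"] by (simp add: comp_def)
  also have "\<dots> = 2*r * (\<Sum>j=1..n. mean_rotation j)"
    using sum_points_piperm_invariant[OF r_pos, where f="\<lambda>p. mean_rotation (block r p)"]
      piperm_block[OF r_pos] r_pos by simp
  finally show ?thesis
    using r_pos sum_mean_rotation by simp
qed

end

locale conjugate_pair =
  t: centralizing_conjugate r n g t \<tau>t d + s: centralizing_conjugate r n "inv g" s \<tau>s e
  for r n :: nat and g t \<tau>t d s \<tau>s e :: "nat \<Rightarrow> nat"
begin

lemma conj_s: "g \<circ> s = piperm r n \<circ> g"
proof
  fix z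
  have "s z = inv g (piperm r n (g z))"
    using fun_cong[OF s.conj, of "g z"] permutes_inverses(2)[OF t.g_permutes] by simp
  then show "(g \<circ> s) z = (piperm r n \<circ> g) z"
    using permutes_inverses(1)[OF t.g_permutes] by simp
qed

lemma conjugate_cycles:
  assumes j: "j \<in> {1..n}"
  defines "j' \<equiv> block r (inv g (block_point r j 0))"
  shows "least_power \<tau>s j' = least_power \<tau>t j"
    "4 dvd 2*r \<Longrightarrow> 4 dvd int (t.cycle_rotation j) - int (s.cycle_rotation j')"
proof -
  define p where "p = block_point r j 0"
  define q where "q = inv g p"
  have p: "p \<in> {1..2*r*n}" "block r p = j"
    using block_point_in_points[OF j] j t.r_pos by (simp_all add: p_def)
  have q: "q \<in> {1..2*r*n}" "block r q = j'" "g q = p"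
    using t.inv_g_in_points[OF p(1)] permutes_inverses(1)[OF t.g_permutes]
    by (simp_all add: q_def j'_def p_def)
  have g_inj: "inj g" by (rule permutes_inj[OF t.g_permutes])
  have pi_p: "(piperm r n ^^ a) p = g ((s^^a) q)" for a
    using funpow_conj_apply[OF conj_s, of a q] q(3) by simp
  have t_p: "(t^^b) p = g ((piperm r n ^^ b) q)" for b
    using funpow_conj_apply[OF t.conj, of b q] q(3) by simp
  have x_return: "(\<exists>b. (piperm r n ^^ a) p = (t^^b) p) \<longleftrightarrow> least_power \<tau>s j' dvd a" for a
    using s.return_iff[OF q(1)] q(2) by (simp add: pi_p t_p inj_eq[OF g_inj])
  have k'_return: "(piperm r n ^^ least_power \<tau>s j') p = (t^^s.cycle_rotation j') p"
    using s.cycle_return[OF q(1)] q(2) by (simp add: pi_p t_p)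
  have M: "0 < 2*r" using t.r_pos by simp
  note returns = commuting_first_returns[OF t.commute M piperm_period[OF t.r_pos p(1)]
      t.t_period[OF p(1)] t.return_iff[OF p(1)] t.cycle_return[OF p(1)] x_return k'_return,
      unfolded p(2)]
  show "least_power \<tau>s j' = least_power \<tau>t j" by (rule returns(1))
  assume "4 dvd 2*r"
  define k where "k = least_power \<tau>t j"
  define l where "l = 2*r div k"
  define a where "a = t.cycle_rotation j div k"
  define b where "b = s.cycle_rotation j' div k"
  have "int l dvd int a * int b - 1"
    using returns(3) t.r_pos unfolding k_def l_def a_def b_def
    by (metis mod_eq_dvd_iff of_nat_1 of_nat_mod of_nat_mult)
  moreover have "int k * int l = int (2*r)"
    using t.first_return(1)[OF j] by (simp add: k_def l_def flip: of_nat_mult)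
  moreover have "(4::int) dvd int (2*r)"
    using \<open>4 dvd 2*r\<close> by (metis int_dvd_int_iff of_nat_numeral)
  ultimately have "4 dvd int k * (int a - int b)"
    by (metis four_dvd_mult_diff_if_unit_product)
  then show "4 dvd int (t.cycle_rotation j) - int (s.cycle_rotation j')"
    using t.first_return(2)[OF j] returns(2) t.r_pos
    by (simp add: k_def a_def b_def right_diff_distrib flip: of_nat_mult)
qed

lemma sum_rotations_mod_four:
  assumes "4 dvd 2*r"
  shows "4 dvd int (\<Sum>j=1..n. d j) - int (\<Sum>j=1..n. e j)"
proof -
  \<comment> \<open>\<open>h\<close> pairs the \<open>\<tau>t\<close>-cycle of \<open>j\<close> with the \<open>\<tau>s\<close>-cycle met by \<open>g\<^sup>-\<^sup>1\<close>; \<open>F\<close> is invariant under \<open>\<pi>\<close>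
    and \<open>t\<close>, and summing it over all points shows that \<open>\<Sum>h = \<Sum>d - \<Sum>e\<close>\<close>
  define F where "F p = s.mean_rotation (block r (inv g p))" for p
  define h where "h j = int (t.mean_rotation j) - int (F (block_point r j 0))" for j
  have F_piperm: "\<forall>p\<in>{1..2*r*n}. F (piperm r n p) = F p"
    using s.mean_rotation_conjugate_piperm by (simp add: F_def)
  have F_t: "F (t p) = F p" if "p \<in> {1..2*r*n}" for p
  proof -
    have "g (piperm r n (inv g p)) = t p"
      using fun_cong[OF t.conj, of "inv g p"] permutes_inverses(1)[OF t.g_permutes] by simp
    then have "inv g (t p) = piperm r n (inv g p)"
      using permutes_inverses(2)[OF t.g_permutes] by metis
    then show ?thesis
      using piperm_block(2)[OF t.r_pos t.inv_g_in_points[OF that]] by (simp add: F_def)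
  qed
  have "(\<Sum>j=1..n. h j) = int (\<Sum>j=1..n. d j) - int (\<Sum>j=1..n. e j)"
    using t.sum_mean_rotation s.sum_mean_rotation_conjugate
    by (simp add: h_def F_def sum_subtractf flip: of_nat_sum)
  moreover have "4 dvd (\<Sum>j=1..n. h j)"
  proof (rule sum_dvd_of_cycle_multiples[OF t.permutation])
    show "\<tau>t ` {1..n} \<subseteq> {1..n}" using permutes_image[OF t.permutes_blocks] by simp
    show "\<forall>j\<in>{1..n}. h (\<tau>t j) = h j"
    proof
      fix j assume j: "j \<in> {1..n}"
      have \<tau>j: "\<tau>t j \<in> {1..n}" using j by (rule permutes_in_image[OF t.permutes_blocks, THEN iffD2])
      have c: "d (\<tau>t j) mod (2*r) < 2*r" using t.r_pos by simp
      have "F (block_point r (\<tau>t j) 0) = F (block_point r (\<tau>t j) (d (\<tau>t j) mod (2*r)))"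
        using piperm_invariant_block_point[OF t.r_pos F_piperm \<tau>j c] by simp
      also have "\<dots> = F (t (block_point r j 0))"
        using t.action j t.r_pos by (simp add: block_action_def)
      also have "\<dots> = F (block_point r j 0)"
        using F_t block_point_in_points[OF j] t.r_pos by simp
      finally have "F (block_point r (\<tau>t j) 0) = F (block_point r j 0)" .
      then show "h (\<tau>t j) = h j" by (simp add: h_def t.mean_rotation_apply)
    qed
    show "\<forall>j\<in>{1..n}. 4 dvd of_nat (least_power \<tau>t j) * h j"
    proof
      fix j assume j: "j \<in> {1..n}"
      define j' where "j' = block r (inv g (block_point r j 0))"
      have "j' \<in> {1..n}"
        using block_in_blocks[OF t.r_pos t.inv_g_in_points[OF block_point_in_points[OF j]]] t.r_pos
        by (simp add: j'_def)
      have "least_power \<tau>t j * t.mean_rotation j = t.cycle_rotation j"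
        using t.first_return(2)[OF j] by (simp add: t.mean_rotation_def)
      moreover have "least_power \<tau>t j * s.mean_rotation j' = s.cycle_rotation j'"
        using s.first_return(2)[OF \<open>j' \<in> {1..n}\<close>] conjugate_cycles(1)[OF j]
        by (simp add: s.mean_rotation_def j'_def)
      ultimately have "int (least_power \<tau>t j) * h j
          = int (t.cycle_rotation j) - int (s.cycle_rotation j')"
        by (simp add: h_def F_def j'_def right_diff_distrib flip: of_nat_mult)
      then show "4 dvd of_nat (least_power \<tau>t j) * h j"
        using conjugate_cycles(2)[OF j assms] by (simp add: j'_def)
    qed
  qed simp
  ultimately show ?thesis by simp
qed

end

lemma conjugate_pairI:
  assumes "0 < r" and g: "g permutes {1..2*r*n}"
    and t: "t = g \<circ> piperm r n \<circ> inv g" and commute: "t \<circ> piperm r n = piperm r n \<circ> t"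
    and "block_action r n t \<tau>t d" "block_action r n (inv g \<circ> piperm r n \<circ> g) \<tau>s e"
  shows "conjugate_pair r n g t \<tau>t d (inv g \<circ> piperm r n \<circ> g) \<tau>s e"
proof -
  let ?s = "inv g \<circ> piperm r n \<circ> g"
  have g_pi: "g (piperm r n z) = t (g z)" for z
    by (simp add: t permutes_inverses(2)[OF g])
  have g_s: "g (?s z) = piperm r n (g z)" for z
    by (simp add: permutes_inverses(1)[OF g])
  have t_pi: "t (piperm r n z) = piperm r n (t z)" for z
    using fun_cong[OF commute, of z] by simp
  have "piperm r n \<circ> ?s = ?s \<circ> piperm r n"
  proof
    fix z
    have "g (piperm r n (?s z)) = g (?s (piperm r n z))"
      by (simp only: g_pi g_s t_pi)
    then show "(piperm r n \<circ> ?s) z = (?s \<circ> piperm r n) z"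
      using permutes_inj[OF g] by (simp add: inj_eq)
  qed
  moreover have "g \<circ> piperm r n = t \<circ> g" "inv g \<circ> piperm r n = ?s \<circ> inv g"
    by (simp_all add: fun_eq_iff g_pi permutes_inverses[OF g])
  ultimately show ?thesis
    using assms permutes_inv[OF g] by unfold_locales simp_all
qed

theorem lemma2p18:
  fixes r n :: nat and t g B B' :: "nat \<Rightarrow> nat" and d e :: "nat \<Rightarrow> nat"
  assumes "r \<ge> 2" and "n \<ge> 2"
    and "g permutes {1..2*r*n}"
    and "t = g \<circ> piperm r n \<circ> inv g"
    and "t \<circ> piperm r n = piperm r n \<circ> t"
    and "\<forall>j\<in>{1..n}. d j \<le> 2*r - 1" and "\<forall>j\<in>{1..n}. e j \<le> 2*r - 1"
    and "B \<in> Bgroup r n" and "B' \<in> Bgroup r n"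
    and "t = Apow_prod r n d \<circ> B"
    and "inv g \<circ> piperm r n \<circ> g = Apow_prod r n e \<circ> B'"
  shows "(odd n \<longrightarrow> even (\<Sum>j=1..n. e j + d j))
       \<and> (even r \<and> even n \<longrightarrow> (\<Sum>j=1..n. e j + d j) mod 4 = 0)"
proof -
  obtain \<tau>t where "block_action r n t \<tau>t d"
    using block_action_Apow_prod_Bgroup[OF assms(8)] assms(10) by metis
  moreover obtain \<tau>s where "block_action r n (inv g \<circ> piperm r n \<circ> g) \<tau>s e"
    using block_action_Apow_prod_Bgroup[OF assms(9)] assms(11) by metis
  ultimately interpret conjugate_pair r n g t \<tau>t d "inv g \<circ> piperm r n \<circ> g" \<tau>s e
    using assms(1,3-5) by (intro conjugate_pairI) auto
  define D E where "D = (\<Sum>j=1..n. d j)" and "E = (\<Sum>j=1..n. e j)"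
  have "(\<Sum>j=1..n. e j + d j) = E + D"
    by (simp add: D_def E_def sum.distrib)
  moreover have "even (D + n)" "even (E + n)"
    unfolding D_def E_def by (rule t.sum_rotation_parity s.sum_rotation_parity)+
  moreover have "even r \<Longrightarrow> 4 dvd int D - int E"
    using sum_rotations_mod_four by (simp add: D_def E_def)
  ultimately show ?thesis by presburger
qed

end
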